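(* (Rolle's theorem for $\alpha$-fractional differentiable functions.) Let $0<a<b$ and let $f:[a,b]\to\mathbb{R}$ be a function such that (1) $f$ is continuous on $[a,b]$, (2) $f$ is $\alpha$-differentiable at every point of $(a,b)$ for some $\alpha\in(0,1)$, and (3) $f(a)=f(b)$. Then there exists $c\in(a,b)$ such that $\mathcal{D}^\alpha(f)(c)=0$.
   Context: For a real function $f$, a point $t>0$ in the interior of its domain, and $\alpha\in(0,1)$, the $\alpha$-fractional derivative of $f$ at $t$ is $\mathcal{D}^\alpha(f)(t)=\lim_{\epsilon\to 0}\frac{f(te^{\epsilon t^{-\alpha}})-f(t)}{\epsilon}$, and $f$ is $\alpha$-differentiable at $t$ if this limit exists (as a real number). *)

theory Defs
  imports "HOL-Analysis.Analysis"
begin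

definition frac_quot :: "real \<Rightarrow> (real \<Rightarrow> real) \<Rightarrow> real \<Rightarrow> real \<Rightarrow> real" where
  "frac_quot \<alpha> f t \<epsilon> = (f (t * exp (\<epsilon> * t powr (- \<alpha>))) - f t) / \<epsilon>"

definition frac_differentiable :: "real \<Rightarrow> (real \<Rightarrow> real) \<Rightarrow> real \<Rightarrow> bool" where
  "frac_differentiable \<alpha> f t \<longleftrightarrow> (\<exists>L. (frac_quot \<alpha> f t \<longlongrightarrow> L) (at 0))"

definition frac_deriv :: "real \<Rightarrow> (real \<Rightarrow> real) \<Rightarrow> real \<Rightarrow> real" where
  "frac_deriv \<alpha> f t = Lim (at 0) (frac_quot \<alpha> f t)"

end

theory Submission
  imports Defs
begin

text \<open>
  Fermat's argument carries over to the fractional difference quotient: the point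
  \<open>t * exp (\<epsilon> * t powr (- \<alpha>))\<close> lies to the right of \<open>t\<close> for \<open>\<epsilon> > 0\<close> and to
  the left for \<open>\<epsilon> < 0\<close>, so at a local maximum the quotient is \<open>\<le> 0\<close> on the right of
  \<open>\<epsilon> = 0\<close> and \<open>\<ge> 0\<close> on the left, forcing its limit to vanish. A continuous function
  with \<open>f a = f b\<close> attains an extremum in the open interval, which is such a point.
\<close>

lemma frac_quot_uminus: "frac_quot \<alpha> (\<lambda>x. - f x) t = (\<lambda>\<epsilon>. - frac_quot \<alpha> f t \<epsilon>)"
  by (auto simp: frac_quot_def fun_eq_iff minus_divide_left)

lemma frac_quot_limit_local_max:
  fixes f :: "real \<Rightarrow> real"
  assumes max: "eventually (\<lambda>y. f y \<le> f c) (nhds c)"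
    and lim: "(frac_quot \<alpha> f c \<longlongrightarrow> L) (at 0)"
  shows "L = 0"
proof -
  have "((\<lambda>\<epsilon>. c * exp (\<epsilon> * c powr (- \<alpha>))) \<longlongrightarrow> c) (at 0)"
    by (rule tendsto_eq_intros refl | simp)+
  with max have "eventually (\<lambda>\<epsilon>. f (c * exp (\<epsilon> * c powr (- \<alpha>))) - f c \<le> 0) (at 0)"
    unfolding diff_le_0_iff_le filterlim_iff by blast
  then have near_right: "eventually (\<lambda>\<epsilon>. f (c * exp (\<epsilon> * c powr (- \<alpha>))) - f c \<le> 0) (at_right 0)"
    and near_left: "eventually (\<lambda>\<epsilon>. f (c * exp (\<epsilon> * c powr (- \<alpha>))) - f c \<le> 0) (at_left 0)"
    by (simp_all add: eventually_at_split)
  have "eventually (\<lambda>\<epsilon>. frac_quot \<alpha> f c \<epsilon> \<le> 0) (at_right 0)"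
    using near_right eventually_at_right_less[of 0]
    by eventually_elim (simp add: frac_quot_def divide_nonpos_pos)
  moreover have "(frac_quot \<alpha> f c \<longlongrightarrow> L) (at_right 0)"
    using lim filterlim_at_split by blast
  ultimately have "L \<le> 0"
    by (metis tendsto_upperbound trivial_limit_at_right_real)
  have "eventually (\<lambda>\<epsilon>. frac_quot \<alpha> f c \<epsilon> \<ge> 0) (at_left 0)"
    using near_left eventually_at_left_real[of "-1" 0, simplified]
    by eventually_elim (simp add: frac_quot_def divide_nonpos_neg)
  moreover have "(frac_quot \<alpha> f c \<longlongrightarrow> L) (at_left 0)"
    using lim filterlim_at_split by blast
  ultimately have "L \<ge> 0"
    by (metis tendsto_lowerbound trivial_limit_at_left_real)
  with \<open>L \<le> 0\<close> show ?thesis by simp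
qed

lemma frac_deriv_local_extremum:
  fixes f :: "real \<Rightarrow> real"
  assumes extremum: "eventually (\<lambda>y. f y \<le> f c) (nhds c) \<or> eventually (\<lambda>y. f c \<le> f y) (nhds c)"
    and diff: "frac_differentiable \<alpha> f c"
  shows "frac_deriv \<alpha> f c = 0"
proof -
  obtain L where lim: "(frac_quot \<alpha> f c \<longlongrightarrow> L) (at 0)"
    using diff unfolding frac_differentiable_def by blast
  have "L = 0"
    using extremum
  proof
    assume "eventually (\<lambda>y. f y \<le> f c) (nhds c)"
    then show ?thesis using lim by (rule frac_quot_limit_local_max)
  next
    assume "eventually (\<lambda>y. f c \<le> f y) (nhds c)"
    then have "eventually (\<lambda>y. - f y \<le> - f c) (nhds c)" by simp
    moreover have "(frac_quot \<alpha> (\<lambda>x. - f x) c \<longlongrightarrow> - L) (at 0)"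
      unfolding frac_quot_uminus using lim by (rule tendsto_minus)
    ultimately have "- L = 0" by (rule frac_quot_limit_local_max)
    then show ?thesis by simp
  qed
  moreover have "frac_deriv \<alpha> f c = L"
    unfolding frac_deriv_def using lim by (rule tendsto_Lim[OF trivial_limit_at])
  ultimately show ?thesis by simp
qed

lemma continuous_on_Icc_interior_extremum:
  fixes f :: "real \<Rightarrow> real"
  assumes "a < b" and cont: "continuous_on {a..b} f" and "f a = f b"
  shows "\<exists>c\<in>{a<..<b}. (\<forall>y\<in>{a..b}. f y \<le> f c) \<or> (\<forall>y\<in>{a..b}. f c \<le> f y)"
proof -
  have "{a..b} \<noteq> {}" using \<open>a < b\<close> by simp
  then obtain x z where
    x: "x \<in> {a..b}" "\<forall>y\<in>{a..b}. f y \<le> f x" and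
    z: "z \<in> {a..b}" "\<forall>y\<in>{a..b}. f z \<le> f y"
    using continuous_attains_sup[OF compact_Icc _ cont] continuous_attains_inf[OF compact_Icc _ cont]
    by blast
  consider "x \<in> {a<..<b}" | "z \<in> {a<..<b}" | "x \<in> {a, b}" "z \<in> {a, b}"
    using x(1) z(1) by fastforce
  then show ?thesis
  proof cases
    case 3
    \<comment> \<open>both extrema sit at the endpoints, where \<open>f\<close> takes the same value, so \<open>f\<close> is constant\<close>
    then have "\<forall>y\<in>{a..b}. f y = f a" using x z \<open>f a = f b\<close> by (metis empty_iff insert_iff order_antisym)
    moreover have "(a + b) / 2 \<in> {a<..<b}" using \<open>a < b\<close> by simp
    ultimately show ?thesis by (metis atLeastAtMost_iff greaterThanLessThan_iff less_imp_le order_refl)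
  qed (use x z in blast)+
qed

theorem mainTheorem5:
  fixes f :: "real \<Rightarrow> real" and a b \<alpha> :: real
  assumes "0 < a" and "a < b"
    and "0 < \<alpha>" and "\<alpha> < 1"
    and "continuous_on {a..b} f"
    and "\<forall>t\<in>{a<..<b}. frac_differentiable \<alpha> f t"
    and "f a = f b"
  shows "\<exists>c\<in>{a<..<b}. frac_deriv \<alpha> f c = 0"
proof -
  obtain c where c: "c \<in> {a<..<b}"
    and extremum: "(\<forall>y\<in>{a..b}. f y \<le> f c) \<or> (\<forall>y\<in>{a..b}. f c \<le> f y)"
    using continuous_on_Icc_interior_extremum assms(2,5,7) by blast
  have "eventually (\<lambda>y. y \<in> {a..b}) (nhds c)"
    using c eventually_nhds_in_open[of "{a<..<b}" c] by (auto elim: eventually_mono)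
  then have "eventually (\<lambda>y. f y \<le> f c) (nhds c) \<or> eventually (\<lambda>y. f c \<le> f y) (nhds c)"
    using extremum by (metis (mono_tags, lifting) eventually_mono)
  then have "frac_deriv \<alpha> f c = 0"
    using c assms(6) by (blast intro: frac_deriv_local_extremum)
  with c show ?thesis by blast
qed

end
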